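(* Let $b_{n,p}$ denote the number of permutations of length $n$ in the basis $\mathcal{B}_p$ (equivalently, by the structural characterization, the basis permutations of length $n$ with exactly $p+1$ non-left-to-right-maxima). Then $b_{n,p}=0$ if $p<(n-2)/2$ or $p>n-2$, $b_{n,n-2}=(n-1)!$ for $n>1$, and for $p<n-2$, $$b_{n,p}=\sum_{\ell=0}^{p-1}(\ell+1)!\binom{n-2}{\ell}\,b_{n-\ell-2,\,p-\ell-1}.$$
   Context: A right-jump transforms $\sigma=\sigma_1\cdots\sigma_n$ into $\sigma_1\cdots\sigma_{i-1}\sigma_{i+1}\cdots\sigma_j\sigma_i\sigma_{j+1}\cdots\sigma_n$ for some $1\le i<j\le n$. A left-to-right maximum of $\sigma$ is an entry $\sigma_i$ with $\sigma_k<\sigma_i$ for all $k<i$; every other entry is a non-left-to-right-maximum. A permutation $\pi$ is a pattern of $\sigma$ (written $\pi\prec\sigma$) if some subsequence of $\sigma$ is order-isomorphic to $\pi$. $\mathcal{C}_p$ is the set of all permutations (of any length $n$) obtainable from the identity $12\cdots n$ by at most $p$ right-jumps. The basis $\mathcal{B}_p$ is the set of permutations $\sigma\notin\mathcal{C}_p$ such that every pattern $\pi\prec\sigma$ with $\pi\ne\sigma$ lies in $\mathcal{C}_p$. *)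

theory Defs
  imports Main "HOL-Library.Sublist"
begin

definition is_perm :: "nat list \<Rightarrow> bool" where
  "is_perm \<sigma> \<longleftrightarrow> distinct \<sigma> \<and> set \<sigma> = {1..length \<sigma>}"

text \<open>Right-jump with 0-based positions i < j < n: the entry at position i is moved
  to just after the entry at position j.\<close>
definition right_jump :: "nat list \<Rightarrow> nat \<Rightarrow> nat \<Rightarrow> nat list" where
  "right_jump \<sigma> i j = take i \<sigma> @ take (j - i) (drop (Suc i) \<sigma>) @ [\<sigma> ! i] @ drop (Suc j) \<sigma>"

definition rjump_step :: "nat list \<Rightarrow> nat list \<Rightarrow> bool" where
  "rjump_step \<sigma> \<tau> \<longleftrightarrow> (\<exists>i j. i < j \<and> j < length \<sigma> \<and> \<tau> = right_jump \<sigma> i j)"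

definition C :: "nat \<Rightarrow> nat list set" where
  "C p = {\<sigma>. \<exists>n k. k \<le> p \<and> (rjump_step ^^ k) [1..<Suc n] \<sigma>}"

definition order_iso :: "nat list \<Rightarrow> nat list \<Rightarrow> bool" where
  "order_iso \<pi> \<tau> \<longleftrightarrow> length \<pi> = length \<tau> \<and>
     (\<forall>i<length \<pi>. \<forall>j<length \<pi>. \<pi> ! i < \<pi> ! j \<longleftrightarrow> \<tau> ! i < \<tau> ! j)"

definition pattern :: "nat list \<Rightarrow> nat list \<Rightarrow> bool" where
  "pattern \<pi> \<sigma> \<longleftrightarrow> (\<exists>\<tau>. subseq \<tau> \<sigma> \<and> order_iso \<pi> \<tau>)"

definition basis :: "nat \<Rightarrow> nat list set" where
  "basis p = {\<sigma>. is_perm \<sigma> \<and> \<sigma> \<notin> C p \<and>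
     (\<forall>\<pi>. is_perm \<pi> \<and> pattern \<pi> \<sigma> \<and> \<pi> \<noteq> \<sigma> \<longrightarrow> \<pi> \<in> C p)}"

definition b :: "nat \<Rightarrow> nat \<Rightarrow> nat" where
  "b n p = card {\<sigma> \<in> basis p. length \<sigma> = n}"

end

theory Submission
  imports Defs "HOL-Combinatorics.Multiset_Permutations"
begin

text \<open>A right-jump creates at most one new non-left-to-right maximum, and the leftmost
  non-left-to-right maximum can always be removed by undoing a right-jump, so C_p consists of
  the permutations with at most p non-left-to-right maxima. This count can only drop when
  passing to a pattern, hence B_p consists of the permutations with exactly p + 1 of them
  that are critical: deleting any single entry lowers the count.

  Writing a permutation of {1..n} as t @ n # S, every entry of S is a non-left-to-right
  maximum, and the permutation is critical iff t is critical and some entry of S exceeds all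
  of t. The latter forces n - 1 into S. Choosing the l-set B = set S - {n - 1} in
  (n - 2 choose l) ways, the order of S in (l + 1)! ways, and a critical arrangement of the
  remaining n - 2 - l values gives the recurrence; each such step puts at least one entry
  after the maximum, which gives n \<le> 2 (p + 1).\<close>

section \<open>Non-left-to-right maxima\<close>

fun nlrm_from :: "'a::linorder set \<Rightarrow> 'a list \<Rightarrow> nat" where
  "nlrm_from P [] = 0"
| "nlrm_from P (x # xs) = (if \<exists>y\<in>P. x < y then 1 else 0) + nlrm_from (insert x P) xs"

definition nlrm :: "'a::linorder list \<Rightarrow> nat" where
  "nlrm xs = nlrm_from {} xs"

lemma nlrm_from_append: "nlrm_from P (xs @ ys) = nlrm_from P xs + nlrm_from (P \<union> set xs) ys"
  by (induction xs arbitrary: P) auto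

lemma nlrm_from_mono: "P \<subseteq> Q \<Longrightarrow> nlrm_from P xs \<le> nlrm_from Q xs"
proof (induction xs arbitrary: P Q)
  case (Cons x xs)
  then have "nlrm_from (insert x P) xs \<le> nlrm_from (insert x Q) xs" by (intro Cons.IH) auto
  then show ?case using Cons.prems by auto
qed simp

lemma nlrm_from_cong:
  "(\<And>v. (\<exists>y\<in>P. v < y) \<longleftrightarrow> (\<exists>y\<in>Q. v < y)) \<Longrightarrow> nlrm_from P xs = nlrm_from Q xs"
proof (induction xs arbitrary: P Q)
  case (Cons x xs)
  have "nlrm_from (insert x P) xs = nlrm_from (insert x Q) xs"
    by (rule Cons.IH) (use Cons.prems in auto)
  then show ?case using Cons.prems[of x] by simp
qed simp

lemma nlrm_from_insert_dominated: "x < z \<Longrightarrow> z \<in> P \<Longrightarrow> nlrm_from (insert x P) xs = nlrm_from P xs"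
  by (rule nlrm_from_cong) (auto intro: less_trans)

lemma nlrm_from_le_length: "nlrm_from P xs \<le> length xs"
  by (induction xs arbitrary: P) (simp_all add: le_SucI)

lemma nlrm_from_eq_length: "\<forall>x\<in>set xs. \<exists>y\<in>P. x < y \<Longrightarrow> nlrm_from P xs = length xs"
proof (induction xs arbitrary: P)
  case (Cons x xs)
  have "nlrm_from (insert x P) xs = length xs" by (rule Cons.IH) (use Cons.prems in auto)
  then show ?case using Cons.prems by simp
qed simp

lemma nlrm_from_less_length_iff:
  "nlrm_from P xs < length xs \<longleftrightarrow> (\<exists>x\<in>set xs. \<forall>y\<in>P. y \<le> x)"
proof (induction xs arbitrary: P)
  case (Cons a xs)
  show ?case
  proof (cases "\<exists>y\<in>P. a < y")
    case True
    then have "(\<forall>y\<in>P. y \<le> x) \<longleftrightarrow> (\<forall>y\<in>insert a P. y \<le> x)" for x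
      by (auto intro: less_imp_le less_le_trans)
    with True show ?thesis using Cons.IH[of "insert a P"] by auto
  next
    case False
    then show ?thesis using nlrm_from_le_length[of "insert a P" xs] by (auto simp: not_less le_imp_less_Suc)
  qed
qed simp

lemma nlrm_from_pos_split:
  "0 < nlrm_from P xs \<Longrightarrow> \<exists>u x w. xs = u @ x # w \<and> (\<exists>y\<in>P \<union> set u. x < y)"
proof (induction xs arbitrary: P)
  case (Cons a xs)
  show ?case
  proof (cases "\<exists>y\<in>P. a < y")
    case True
    then show ?thesis by (intro exI[of _ "[]"]) auto
  next
    case False
    with Cons.prems have "0 < nlrm_from (insert a P) xs" by simp
    with Cons.IH obtain u x w where "xs = u @ x # w" "\<exists>y\<in>insert a P \<union> set u. x < y"
      by blast
    then show ?thesis by (intro exI[of _ "a # u"]) auto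
  qed
qed simp

lemma nlrm_from_eq_0_iff:
  "nlrm_from P xs = 0 \<longleftrightarrow> sorted xs \<and> (\<forall>y\<in>P. \<forall>x\<in>set xs. y \<le> x)"
proof (induction xs arbitrary: P)
  case (Cons a xs)
  have "(\<forall>y\<in>P. y \<le> a \<and> (\<forall>x\<in>set xs. y \<le> x)) \<longleftrightarrow> (\<forall>y\<in>P. y \<le> a)"
    if "\<forall>x\<in>set xs. a \<le> x" using that order_trans by blast
  then show ?case using Cons.IH[of "insert a P"] by (auto simp: not_less) (meson leD)
qed simp

lemma nlrm_eq_0_iff: "nlrm xs = 0 \<longleftrightarrow> sorted xs"
  unfolding nlrm_def by (simp add: nlrm_from_eq_0_iff)

lemma nlrm_snoc: "nlrm (xs @ [x]) = nlrm xs + (if \<exists>y\<in>set xs. x < y then 1 else 0)"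
  unfolding nlrm_def by (simp add: nlrm_from_append)

lemma nlrm_less_length: "xs \<noteq> [] \<Longrightarrow> nlrm xs < length xs"
  unfolding nlrm_def by (cases xs) (simp_all add: nlrm_from_less_length_iff le_imp_less_Suc nlrm_from_le_length)

section \<open>The class C_p\<close>

lemma rjump_step_iff:
  "rjump_step t s \<longleftrightarrow> (\<exists>a x c d. c \<noteq> [] \<and> t = a @ x # c @ d \<and> s = a @ c @ x # d)"
proof
  assume "rjump_step t s"
  then obtain i j where ij: "i < j" "j < length t" and s: "s = right_jump t i j"
    unfolding rjump_step_def by blast
  define c where "c = take (j - i) (drop (Suc i) t)"
  have "drop (Suc i) t = c @ drop (Suc j) t"
    using ij unfolding c_def by (metis append_take_drop_id drop_drop Suc_diff_Suc Suc_leI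
      le_add_diff_inverse2 less_imp_le_nat add_Suc_right)
  then have "t = take i t @ t ! i # c @ drop (Suc j) t"
    using ij by (metis id_take_nth_drop less_trans)
  moreover have "c \<noteq> []" using ij unfolding c_def by simp
  moreover have "s = take i t @ c @ t ! i # drop (Suc j) t"
    unfolding s right_jump_def c_def by simp
  ultimately show "\<exists>a x c d. c \<noteq> [] \<and> t = a @ x # c @ d \<and> s = a @ c @ x # d" by blast
next
  assume "\<exists>a x c d. c \<noteq> [] \<and> t = a @ x # c @ d \<and> s = a @ c @ x # d"
  then obtain a x c d where "c \<noteq> []" "t = a @ x # c @ d" "s = a @ c @ x # d" by blast
  then show "rjump_step t s" unfolding rjump_step_def right_jump_def
    by (intro exI[of _ "length a"] exI[of _ "length a + length c"]) simp
qed

lemma mset_rjump_step: "rjump_step t s \<Longrightarrow> mset s = mset t"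
  unfolding rjump_step_iff by auto

lemma is_perm_mset_eq: "mset t = mset s \<Longrightarrow> is_perm t \<Longrightarrow> is_perm s"
  unfolding is_perm_def by (metis mset_eq_imp_distinct_iff mset_eq_length mset_eq_setD)

lemma nlrm_rjump_step_le: "rjump_step t s \<Longrightarrow> nlrm s \<le> Suc (nlrm t)"
proof -
  assume "rjump_step t s"
  then obtain a x c d where t: "t = a @ x # c @ d" and s: "s = a @ c @ x # d"
    unfolding rjump_step_iff by blast
  have "nlrm_from (set a) c \<le> nlrm_from (insert x (set a)) c" by (rule nlrm_from_mono) auto
  then show ?thesis unfolding s t nlrm_def by (simp add: nlrm_from_append)
qed

lemma rjump_steps_from_identity:
  "(rjump_step ^^ k) [1..<Suc n] s \<Longrightarrow> is_perm s \<and> nlrm s \<le> k"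
proof (induction k arbitrary: s)
  case 0
  then have "s = [1..<Suc n]" by simp
  then show ?case unfolding is_perm_def
    by (simp add: nlrm_eq_0_iff atLeastLessThanSuc_atLeastAtMost del: upt_Suc)
next
  case (Suc k)
  then obtain t where "(rjump_step ^^ k) [1..<Suc n] t" and ts: "rjump_step t s" by auto
  with Suc.IH have "is_perm t" "nlrm t \<le> k" by auto
  moreover have "mset t = mset s" "nlrm s \<le> Suc (nlrm t)"
    using mset_rjump_step[OF ts] nlrm_rjump_step_le[OF ts] by simp_all
  ultimately show ?case using is_perm_mset_eq[of t s] by simp
qed

text \<open>Moving the leftmost non-left-to-right maximum x back in front of the first larger entry
  undoes a right-jump and turns x into a left-to-right maximum without affecting any other entry.\<close>
lemma rjump_step_to_fewer_nlrm:
  assumes "distinct s" "nlrm s = Suc k"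
  shows "\<exists>t. nlrm t = k \<and> rjump_step t s"
proof -
  from assms(2) obtain u x w where s: "s = u @ x # w" and "\<exists>y\<in>set u. x < y"
    using nlrm_from_pos_split[of "{}" s] unfolding nlrm_def by auto
  define u1 u2 where "u1 = takeWhile (\<lambda>y. y < x) u" and "u2 = dropWhile (\<lambda>y. y < x) u"
  have u: "u = u1 @ u2" and u1x: "\<forall>y\<in>set u1. y < x"
    unfolding u1_def u2_def by (auto dest: set_takeWhileD)
  then obtain z u2' where z: "u2 = z # u2'"
    using \<open>\<exists>y\<in>set u. x < y\<close> by (cases u2) auto
  have "\<not> z < x" using z unfolding u1_def u2_def by (metis dropWhile_eq_Cons_conv)
  moreover have "z \<in> set u" "x \<notin> set u" using assms(1) unfolding s u z by simp_all
  then have "z \<noteq> x" by blast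
  ultimately have xz: "x < z" by simp
  define t where "t = u1 @ x # u2 @ w"
  have "rjump_step t s" unfolding rjump_step_iff t_def s u z
    by (intro exI[of _ u1] exI[of _ x] exI[of _ "z # u2'"] exI[of _ w]) simp
  have "nlrm_from (insert x (set u1)) u2 = nlrm_from (set u1) u2"
    unfolding z using u1x xz nlrm_from_insert_dominated[OF xz, of "insert z (set u1)" u2']
    by (auto simp: insert_commute)
  moreover have "\<not> (\<exists>y\<in>set u1. x < y)" using u1x by (auto dest: less_asym)
  ultimately have "nlrm t = nlrm_from {} u1 + nlrm_from (set u1) u2 + nlrm_from (insert x (set u)) w"
    unfolding nlrm_def t_def u by (simp add: nlrm_from_append insert_commute Un_commute)
  moreover have "nlrm s = nlrm_from {} u1 + nlrm_from (set u1) u2 + 1 + nlrm_from (insert x (set u)) w"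
    unfolding nlrm_def s u using \<open>\<exists>y\<in>set u. x < y\<close> u by (simp add: nlrm_from_append)
  ultimately show ?thesis using assms(2) \<open>rjump_step t s\<close> by auto
qed

lemma rjump_steps_to_perm: "is_perm s \<Longrightarrow> (rjump_step ^^ nlrm s) [1..<Suc (length s)] s"
proof (induction "nlrm s" arbitrary: s)
  case 0
  then have "s = [1..<Suc (length s)]"
    unfolding is_perm_def by (metis atLeastLessThanSuc_atLeastAtMost distinct_upt nlrm_eq_0_iff
      set_upt sorted_distinct_set_unique sorted_upt)
  then show ?case using 0 by (metis relpowp_0_I)
next
  case (Suc k)
  then obtain t where t: "nlrm t = k" "rjump_step t s"
    using rjump_step_to_fewer_nlrm unfolding is_perm_def by metis
  from t(2) have "mset s = mset t" by (rule mset_rjump_step)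
  then have "is_perm t" "length t = length s"
    using Suc.prems is_perm_mset_eq mset_eq_length by metis+
  then show ?case using Suc.hyps t by (metis relpowp_Suc_I)
qed

lemma C_eq: "C p = {s. is_perm s \<and> nlrm s \<le> p}"
proof
  show "C p \<subseteq> {s. is_perm s \<and> nlrm s \<le> p}"
    unfolding C_def using rjump_steps_from_identity by fastforce
  show "{s. is_perm s \<and> nlrm s \<le> p} \<subseteq> C p"
    unfolding C_def using rjump_steps_to_perm by blast
qed

section \<open>The basis B_p\<close>

definition remove_nth :: "nat \<Rightarrow> 'a list \<Rightarrow> 'a list" where
  "remove_nth i xs = take i xs @ drop (Suc i) xs"

lemma remove_nth_Cons_0 [simp]: "remove_nth 0 (x # xs) = xs"
  by (simp add: remove_nth_def)

lemma remove_nth_Cons_Suc [simp]: "remove_nth (Suc i) (x # xs) = x # remove_nth i xs"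
  by (simp add: remove_nth_def)

lemma remove_nth_append_length [simp]: "remove_nth (length u) (u @ x # w) = u @ w"
  by (simp add: remove_nth_def)

lemma length_remove_nth [simp]: "i < length xs \<Longrightarrow> length (remove_nth i xs) = length xs - 1"
  by (simp add: remove_nth_def)

lemma subseq_remove_nth: "subseq (remove_nth i xs) xs"
  unfolding remove_nth_def
proof (induction xs arbitrary: i)
  case (Cons x xs)
  then show ?case by (cases i) auto
qed simp

lemma set_remove_nth_subset: "set (remove_nth i xs) \<subseteq> set xs"
  unfolding remove_nth_def by (auto dest: in_set_takeD in_set_dropD)

lemma distinct_remove_nth: "distinct xs \<Longrightarrow> distinct (remove_nth i xs)"
  unfolding remove_nth_def by (simp add: set_take_disj_set_drop_if_distinct)

lemma subseq_remove_nth_if_shorter: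
  "subseq t s \<Longrightarrow> length t < length s \<Longrightarrow> \<exists>i<length s. subseq t (remove_nth i s)"
proof (induction s arbitrary: t)
  case (Cons y s)
  show ?case
  proof (cases "subseq t s")
    case True
    then show ?thesis by (intro exI[of _ 0]) simp
  next
    case False
    with Cons.prems obtain t' where t: "t = y # t'" "subseq t' s"
      by (cases t) (auto split: if_splits)
    with Cons.prems Cons.IH obtain i where "i < length s" "subseq t' (remove_nth i s)" by auto
    with t show ?thesis by (intro exI[of _ "Suc i"]) auto
  qed
qed simp

lemma nlrm_from_subseq: "subseq t s \<Longrightarrow> nlrm_from P t \<le> nlrm_from P s"
proof (induction s arbitrary: t P)
  case (Cons y s)
  show ?case
  proof (cases "t \<noteq> [] \<and> hd t = y \<and> subseq (tl t) s")
    case True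
    then show ?thesis using Cons.IH[of "tl t" "insert y P"] by (cases t) auto
  next
    case False
    with Cons.prems have "subseq t s" by (cases t) (auto split: if_splits)
    then have "nlrm_from P t \<le> nlrm_from P s" by (rule Cons.IH)
    also have "\<dots> \<le> nlrm_from (insert y P) s" by (rule nlrm_from_mono) auto
    finally show ?thesis by simp
  qed
qed (auto dest: list_emb_Nil2)

lemma nlrm_subseq: "subseq t s \<Longrightarrow> nlrm t \<le> nlrm s"
  unfolding nlrm_def by (rule nlrm_from_subseq)

lemma bex_set_take_iff: "k \<le> length xs \<Longrightarrow> (\<exists>y\<in>set (take k xs). P y) \<longleftrightarrow> (\<exists>j<k. P (xs ! j))"
  by (metis in_set_conv_nth length_take min.absorb2 nth_take order.strict_trans2)

lemma nlrm_order_iso: "order_iso p t \<Longrightarrow> nlrm p = nlrm t"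
proof -
  assume iso: "order_iso p t"
  then have len: "length p = length t" unfolding order_iso_def by simp
  have "nlrm (take k p) = nlrm (take k t)" if "k \<le> length p" for k
    using that
  proof (induction k)
    case (Suc k)
    then have k: "k < length p" by simp
    have "(\<exists>y\<in>set (take k p). p ! k < y) \<longleftrightarrow> (\<exists>y\<in>set (take k t). t ! k < y)"
      using iso k len unfolding order_iso_def by (simp add: bex_set_take_iff) (metis order.strict_trans)
    then show ?case using Suc k len by (simp add: take_Suc_conv_app_nth nlrm_snoc)
  qed simp
  from this[of "length p"] len show ?thesis by simp
qed

lemma nlrm_remove_nonmax:
  "\<exists>y\<in>set u. x < y \<Longrightarrow> nlrm (u @ x # w) = Suc (nlrm (remove_nth (length u) (u @ x # w)))"
  unfolding nlrm_def by (auto simp: nlrm_from_append nlrm_from_insert_dominated)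

lemma ex_strict_mono_on_onto_interval:
  fixes A :: "'a::linorder set"
  assumes "finite A"
  shows "\<exists>r :: 'a \<Rightarrow> nat. strict_mono_on A r \<and> r ` A = {1..card A}"
proof -
  define r where "r v = card {w\<in>A. w \<le> v}" for v
  have mono: "strict_mono_on A r"
  proof (rule strict_mono_onI)
    fix a b assume "a \<in> A" "b \<in> A" "a < b"
    then have "b \<in> {w\<in>A. w \<le> b} - {w\<in>A. w \<le> a}" "{w\<in>A. w \<le> a} \<subseteq> {w\<in>A. w \<le> b}"
      by auto
    then have "{w\<in>A. w \<le> a} \<subset> {w\<in>A. w \<le> b}" by blast
    then show "r a < r b" unfolding r_def by (rule psubset_card_mono[rotated]) (use assms in auto)
  qed
  have "r ` A \<subseteq> {1..card A}"
  proof
    fix y assume "y \<in> r ` A"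
    then obtain a where a: "a \<in> A" "y = r a" by blast
    then have "1 \<le> r a" unfolding r_def using assms by (auto simp: Suc_le_eq card_gt_0_iff)
    moreover have "r a \<le> card A" unfolding r_def using assms by (intro card_mono) auto
    ultimately show "y \<in> {1..card A}" using a by simp
  qed
  moreover have "card (r ` A) = card {1..card A}"
    using card_image[OF strict_mono_on_imp_inj_on[OF mono]] by simp
  ultimately have "r ` A = {1..card A}" by (intro card_subset_eq) auto
  with mono show ?thesis by blast
qed

lemma ex_perm_order_iso:
  assumes "distinct t"
  shows "\<exists>p. is_perm p \<and> order_iso p t"
proof -
  obtain r :: "nat \<Rightarrow> nat" where r: "strict_mono_on (set t) r" "r ` set t = {1..card (set t)}"
    using ex_strict_mono_on_onto_interval[of "set t"] by auto
  have "is_perm (map r t)" unfolding is_perm_def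
    using r distinct_card[OF assms] strict_mono_on_imp_inj_on[OF r(1)] assms
    by (simp add: distinct_map)
  moreover have "order_iso (map r t) t"
    unfolding order_iso_def using strict_mono_on_less[OF r(1)] by simp
  ultimately show ?thesis by blast
qed

lemma is_perm_nth_eq_card:
  assumes "is_perm s" "i < length s"
  shows "s ! i = card {j. j < length s \<and> s ! j \<le> s ! i}"
proof -
  have "(!) s ` {j. j < length s \<and> s ! j \<le> s ! i} = {w \<in> set s. w \<le> s ! i}"
    by (auto simp: in_set_conv_nth)
  also have "\<dots> = {1..s ! i}" using assms nth_mem[OF assms(2)] unfolding is_perm_def by auto
  finally have "card ((!) s ` {j. j < length s \<and> s ! j \<le> s ! i}) = s ! i" by simp
  moreover have "inj_on ((!) s) {j. j < length s \<and> s ! j \<le> s ! i}"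
    using assms(1) unfolding is_perm_def by (intro inj_on_nth) auto
  ultimately show ?thesis by (simp add: card_image)
qed

lemma is_perm_order_iso_eq:
  assumes "is_perm p" "is_perm s" "order_iso p s"
  shows "p = s"
proof (rule nth_equalityI)
  show len: "length p = length s" using assms(3) unfolding order_iso_def by simp
  fix i assume i: "i < length p"
  have "{j. j < length p \<and> p ! j \<le> p ! i} = {j. j < length s \<and> s ! j \<le> s ! i}"
    using assms(3) i len unfolding order_iso_def by (auto simp: not_less[symmetric])
  then show "p ! i = s ! i"
    using is_perm_nth_eq_card[OF assms(1) i] is_perm_nth_eq_card[OF assms(2)] i len by simp
qed

definition nlrm_critical :: "'a::linorder list \<Rightarrow> bool" where
  "nlrm_critical s \<longleftrightarrow> (\<forall>i<length s. nlrm (remove_nth i s) < nlrm s)"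

lemma basis_imp_nlrm_critical:
  assumes "s \<in> basis p"
  shows "is_perm s \<and> nlrm s = Suc p \<and> nlrm_critical s"
proof -
  have perm: "is_perm s" and "p < nlrm s"
    using assms unfolding basis_def C_eq by auto
  have removed: "nlrm (remove_nth i s) \<le> p" if "i < length s" for i
  proof -
    have "distinct (remove_nth i s)" using perm distinct_remove_nth unfolding is_perm_def by blast
    then obtain q where q: "is_perm q" "order_iso q (remove_nth i s)"
      using ex_perm_order_iso by blast
    have "pattern q s" unfolding pattern_def using q(2) subseq_remove_nth by blast
    moreover have "q \<noteq> s" using q(2) that unfolding order_iso_def by auto
    ultimately have "q \<in> C p" using assms q(1) unfolding basis_def by blast
    then show ?thesis using nlrm_order_iso[OF q(2)] unfolding C_eq by simp
  qed
  from \<open>p < nlrm s\<close> obtain u x w where s: "s = u @ x # w" and "\<exists>y\<in>set u. x < y"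
    using nlrm_from_pos_split[of "{}" s] unfolding nlrm_def by auto
  then have "nlrm s = Suc (nlrm (remove_nth (length u) s))" using nlrm_remove_nonmax by blast
  moreover have "nlrm (remove_nth (length u) s) \<le> p" using removed[of "length u"] s by simp
  ultimately have "nlrm s = Suc p" using \<open>p < nlrm s\<close> by simp
  then show ?thesis using perm removed unfolding nlrm_critical_def by (simp add: le_imp_less_Suc)
qed

lemma nlrm_critical_imp_basis:
  assumes perm: "is_perm s" and "nlrm s = Suc p" and crit: "nlrm_critical s"
  shows "s \<in> basis p"
proof -
  have "q \<in> C p" if q: "is_perm q" "pattern q s" "q \<noteq> s" for q
  proof -
    from q(2) obtain t where t: "subseq t s" "order_iso q t" unfolding pattern_def by blast
    have "length t < length s"
    proof (rule ccontr)
      assume "\<not> length t < length s"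
      then have "t = s" using t(1) list_emb_length subseq_same_length by (metis le_neq_implies_less)
      then show False using is_perm_order_iso_eq[OF q(1) perm] t(2) q(3) by simp
    qed
    then obtain i where i: "i < length s" "subseq t (remove_nth i s)"
      using subseq_remove_nth_if_shorter[OF t(1)] by blast
    have "nlrm q = nlrm t" using nlrm_order_iso[OF t(2)] .
    also have "\<dots> \<le> nlrm (remove_nth i s)" using nlrm_subseq[OF i(2)] .
    also have "\<dots> < nlrm s" using crit i(1) unfolding nlrm_critical_def by blast
    finally show ?thesis using q(1) \<open>nlrm s = Suc p\<close> unfolding C_eq by simp
  qed
  then show ?thesis using assms unfolding basis_def C_eq by auto
qed

lemma basis_eq: "basis p = {s. is_perm s \<and> nlrm s = Suc p \<and> nlrm_critical s}"
  using basis_imp_nlrm_critical nlrm_critical_imp_basis by blast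

section \<open>Splitting at the maximum\<close>

lemma nlrm_append_max:
  assumes "\<forall>x\<in>set t. x < M" "\<forall>x\<in>set S. x < M"
  shows "nlrm (t @ M # S) = nlrm t + length S"
proof -
  have "nlrm_from (insert M (set t)) S = length S" using assms(2) by (intro nlrm_from_eq_length) auto
  moreover have "\<not> (\<exists>y\<in>set t. M < y)" using assms(1) by (auto dest: less_asym)
  ultimately show ?thesis unfolding nlrm_def by (simp add: nlrm_from_append)
qed

lemma all_less_add_Suc_iff:
  "(\<forall>i<m + Suc n. P i) \<longleftrightarrow> (\<forall>i<m. P i) \<and> P m \<and> (\<forall>k<n. P (Suc (m + k)))"
proof (intro iffI allI impI)
  fix i assume "(\<forall>i<m. P i) \<and> P m \<and> (\<forall>k<n. P (Suc (m + k)))" "i < m + Suc n"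
  then show "P i" by (cases i m rule: linorder_cases) (auto dest!: less_imp_Suc_add)
qed auto

text \<open>Deleting an entry after the maximum M always loses a non-left-to-right maximum;
  deleting M itself loses one exactly when some entry after M exceeds everything before M.\<close>
lemma nlrm_critical_append_max:
  assumes dist: "distinct (t @ M # S)" and "\<forall>x\<in>set t. x < M" "\<forall>x\<in>set S. x < M"
  shows "nlrm_critical (t @ M # S) \<longleftrightarrow> nlrm_critical t \<and> (\<exists>s\<in>set S. \<forall>x\<in>set t. x < s)"
proof -
  have whole: "nlrm (t @ M # S) = nlrm t + length S" using nlrm_append_max assms by blast
  have before: "nlrm (remove_nth i (t @ M # S)) = nlrm (remove_nth i t) + length S"
    if "i < length t" for i
  proof -
    have "remove_nth i (t @ M # S) = remove_nth i t @ M # S"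
      using that unfolding remove_nth_def by simp
    moreover have "\<forall>x\<in>set (remove_nth i t). x < M" using set_remove_nth_subset[of i t] assms(2) by blast
    ultimately show ?thesis using nlrm_append_max[OF _ assms(3)] by simp
  qed
  have at_max: "nlrm (remove_nth (length t) (t @ M # S)) = nlrm t + nlrm_from (set t) S"
    unfolding nlrm_def by (simp add: nlrm_from_append)
  have after: "nlrm (remove_nth (Suc (length t + k)) (t @ M # S)) < nlrm (t @ M # S)"
    if "k < length S" for k
  proof -
    have "remove_nth (Suc (length t + k)) (t @ M # S) = t @ M # remove_nth k S"
      unfolding remove_nth_def by simp
    moreover have "\<forall>x\<in>set (remove_nth k S). x < M" using set_remove_nth_subset[of k S] assms(3) by blast
    ultimately show ?thesis using nlrm_append_max[OF assms(2)] whole that by simp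
  qed
  have "nlrm_from (set t) S < length S \<longleftrightarrow> (\<exists>s\<in>set S. \<forall>x\<in>set t. x \<le> s)"
    by (rule nlrm_from_less_length_iff)
  also have "\<dots> \<longleftrightarrow> (\<exists>s\<in>set S. \<forall>x\<in>set t. x < s)"
    using dist by (auto simp: le_less)
  finally have "nlrm_from (set t) S < length S \<longleftrightarrow> (\<exists>s\<in>set S. \<forall>x\<in>set t. x < s)" .
  then show ?thesis
    unfolding nlrm_critical_def length_append length_Cons all_less_add_Suc_iff
    using whole before at_max after by simp
qed

section \<open>Counting critical permutations\<close>

definition critical_lists :: "'a::linorder set \<Rightarrow> nat \<Rightarrow> 'a list set" where
  "critical_lists A q = {s \<in> permutations_of_set A. nlrm_critical s \<and> nlrm s = q}"

definition num_critical :: "nat \<Rightarrow> nat \<Rightarrow> nat" where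
  "num_critical n q = card (critical_lists {1..n} q)"

lemma nlrm_from_map:
  "strict_mono_on A h \<Longrightarrow> P \<subseteq> A \<Longrightarrow> set xs \<subseteq> A \<Longrightarrow> nlrm_from (h ` P) (map h xs) = nlrm_from P xs"
proof (induction xs arbitrary: P)
  case (Cons x xs)
  have "(\<exists>y\<in>h ` P. h x < y) \<longleftrightarrow> (\<exists>y\<in>P. h x < h y)" by blast
  also have "\<dots> \<longleftrightarrow> (\<exists>y\<in>P. x < y)"
    using strict_mono_on_less[OF Cons.prems(1)] Cons.prems(2,3) by (intro bex_cong) auto
  finally have "(\<exists>y\<in>h ` P. h x < y) \<longleftrightarrow> (\<exists>y\<in>P. x < y)" .
  moreover have "nlrm_from (h ` insert x P) (map h xs) = nlrm_from (insert x P) xs"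
    using Cons.prems by (intro Cons.IH) auto
  ultimately show ?case by simp
qed simp

lemma nlrm_map: "strict_mono_on A h \<Longrightarrow> set xs \<subseteq> A \<Longrightarrow> nlrm (map h xs) = nlrm xs"
  unfolding nlrm_def using nlrm_from_map[of A h "{}"] by simp

lemma nlrm_critical_map:
  assumes "strict_mono_on A h" "set s \<subseteq> A"
  shows "nlrm_critical (map h s) \<longleftrightarrow> nlrm_critical s"
proof -
  have "remove_nth i (map h s) = map h (remove_nth i s)" for i
    unfolding remove_nth_def by (simp add: take_map drop_map)
  moreover have "nlrm (map h (remove_nth i s)) = nlrm (remove_nth i s)" for i
    using nlrm_map[OF assms(1)] set_remove_nth_subset[of i s] assms(2) by simp
  ultimately show ?thesis unfolding nlrm_critical_def using nlrm_map[OF assms] by simp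
qed

lemma map_critical_lists:
  assumes "strict_mono_on A h"
  shows "map h ` critical_lists A q = critical_lists (h ` A) q"
proof -
  have inv: "nlrm_critical (map h s) \<longleftrightarrow> nlrm_critical s" "nlrm (map h s) = nlrm s"
    if "s \<in> permutations_of_set A" for s
    using that nlrm_critical_map[OF assms] nlrm_map[OF assms]
    by (simp_all add: permutations_of_set_def)
  have "critical_lists (h ` A) q = {s \<in> map h ` permutations_of_set A. nlrm_critical s \<and> nlrm s = q}"
    unfolding critical_lists_def
    using permutations_of_set_image_inj[OF strict_mono_on_imp_inj_on[OF assms]] by simp
  also have "\<dots> = map h ` {s \<in> permutations_of_set A. nlrm_critical (map h s) \<and> nlrm (map h s) = q}"
    by blast
  also have "\<dots> = map h ` critical_lists A q"
    unfolding critical_lists_def using inv by (simp cong: conj_cong)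
  finally show ?thesis by simp
qed

lemma card_critical_lists:
  fixes A :: "'a::linorder set"
  assumes "finite A"
  shows "card (critical_lists A q) = num_critical (card A) q"
proof -
  obtain r :: "'a \<Rightarrow> nat" where r: "strict_mono_on A r" "r ` A = {1..card A}"
    using ex_strict_mono_on_onto_interval[OF assms] by blast
  have "critical_lists A q \<subseteq> lists A"
    unfolding critical_lists_def using permutations_of_set_lists by blast
  then have "inj_on (map r) (critical_lists A q)"
    using inj_on_map_lists[OF strict_mono_on_imp_inj_on[OF r(1)]] by (rule inj_on_subset[rotated])
  then have "card (critical_lists A q) = card (map r ` critical_lists A q)"
    by (simp add: card_image)
  also have "\<dots> = num_critical (card A) q"
    unfolding num_critical_def map_critical_lists[OF r(1)] r(2) ..
  finally show ?thesis .
qed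

text \<open>A critical permutation of {1..n} is t @ n # S where n - 1 must lie in S; the block of B
  collects those with set S = insert (n - 1) B.\<close>
definition critical_block :: "nat \<Rightarrow> nat \<Rightarrow> nat set \<Rightarrow> nat list set" where
  "critical_block n q B = (\<lambda>(t, S). t @ n # S) `
     (critical_lists ({1..n-2} - B) (q - Suc (card B)) \<times> permutations_of_set (insert (n - 1) B))"

lemma atLeastAtMost_eq_insert_top2: "2 \<le> (n::nat) \<Longrightarrow> {1..n} = insert n (insert (n - 1) {1..n - 2})"
  by auto

lemma critical_lists_subset_blocks:
  assumes "2 \<le> n" "s \<in> critical_lists {1..n} q"
  shows "\<exists>B. B \<subseteq> {1..n-2} \<and> card B < q \<and> s \<in> critical_block n q B"
proof -
  have dist: "distinct s" and set_s: "set s = {1..n}" and crit: "nlrm_critical s"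
    and q: "nlrm s = q"
    using assms(2) unfolding critical_lists_def permutations_of_set_def by auto
  obtain t S where s: "s = t @ n # S" using split_list[of n s] set_s assms(1) by auto
  have "n \<notin> set t \<union> set S" "insert n (set t \<union> set S) = {1..n}"
    using dist set_s unfolding s by auto
  moreover have "n \<notin> insert (n - 1) {1..n-2}" using assms(1) by auto
  ultimately have tS: "set t \<union> set S = insert (n - 1) {1..n-2}"
    using atLeastAtMost_eq_insert_top2[OF assms(1)] insert_ident by metis
  have disj: "set t \<inter> set S = {}" using dist unfolding s by auto
  have top: "n - 1 \<notin> {1..n-2}" "\<forall>x\<in>{1..n-2}. x < n - 1" using assms(1) by auto
  have "\<forall>x\<in>insert (n - 1) {1..n-2}. x < n" using assms(1) by auto
  then have "\<forall>x\<in>set t \<union> set S. x < n" unfolding tS .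
  then have below: "\<forall>x\<in>set t. x < n" "\<forall>x\<in>set S. x < n" by simp_all
  have "nlrm_critical t" and big: "\<exists>y\<in>set S. \<forall>x\<in>set t. x < y"
    using nlrm_critical_append_max dist below crit unfolding s by blast+
  have "n - 1 \<in> set S"
  proof (rule ccontr)
    assume "n - 1 \<notin> set S"
    then have "n - 1 \<in> set t" using tS by blast
    with big obtain y where "y \<in> set S" "n - 1 < y" by blast
    moreover from this have "y < n" using below(2) by blast
    ultimately show False by linarith
  qed
  define B where "B = set S - {n - 1}"
  have B_sub: "B \<subseteq> {1..n-2}" using tS top(1) unfolding B_def by blast
  have set_S: "set S = insert (n - 1) B" using \<open>n - 1 \<in> set S\<close> unfolding B_def by blast
  have "set t = (set t \<union> set S) - set S" using disj by blast
  also have "\<dots> = insert (n - 1) {1..n-2} - set S" unfolding tS ..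
  also have "\<dots> = {1..n-2} - B" unfolding set_S using top(1) by blast
  finally have set_t: "set t = {1..n-2} - B" .
  have "card B = length S - 1" and "0 < length S"
    unfolding B_def using dist \<open>n - 1 \<in> set S\<close> by (auto simp: s distinct_card)
  moreover have "q = nlrm t + length S" using nlrm_append_max[OF below] q unfolding s by simp
  ultimately have "card B < q" "nlrm t = q - Suc (card B)" by linarith+
  with \<open>nlrm_critical t\<close> set_t set_S dist have "(t, S) \<in> critical_lists ({1..n-2} - B) (q - Suc (card B))
      \<times> permutations_of_set (insert (n - 1) B)"
    unfolding critical_lists_def permutations_of_set_def s by auto
  then have "s \<in> critical_block n q B" unfolding critical_block_def s by force
  with B_sub \<open>card B < q\<close> show ?thesis by blast
qed

lemma critical_block_subset:
  assumes "2 \<le> n" "B \<subseteq> {1..n-2}" "card B < q"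
  shows "critical_block n q B \<subseteq> critical_lists {1..n} q"
proof
  fix s assume "s \<in> critical_block n q B"
  then obtain t S where s: "s = t @ n # S"
    and t: "t \<in> critical_lists ({1..n-2} - B) (q - Suc (card B))"
    and S: "S \<in> permutations_of_set (insert (n - 1) B)"
    unfolding critical_block_def by auto
  have fin: "finite B" using assms(2) finite_subset by blast
  have set_t: "set t = {1..n-2} - B" and set_S: "set S = insert (n - 1) B"
    using t S unfolding critical_lists_def permutations_of_set_def by auto
  moreover have "\<forall>x\<in>B. x \<le> n - 2" using assms(2) by auto
  ultimately have below: "\<forall>x\<in>set t. x < n" "\<forall>x\<in>set S. x < n"
    and big: "\<forall>x\<in>set t. x < n - 1" using assms(1) by auto
  have top: "n - 1 \<notin> {1..n-2}" "n \<notin> {1..n-2}" "n \<noteq> n - 1" using assms(1) by auto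
  then have "n - 1 \<notin> B" using assms(2) by blast
  then have "length S = Suc (card B)"
    using length_finite_permutations_of_set[OF S] fin by simp
  moreover have "distinct s"
    using t S set_t set_S top assms(2) unfolding s critical_lists_def permutations_of_set_def
    by (auto simp del: atLeastAtMost_iff)
  moreover have "set s = insert n (insert (n - 1) {1..n-2})"
    using set_t set_S assms(2) unfolding s by (auto simp del: atLeastAtMost_iff)
  then have "set s = {1..n}" using atLeastAtMost_eq_insert_top2[OF assms(1)] by simp
  moreover have "\<exists>y\<in>set S. \<forall>x\<in>set t. x < y" using big set_S by auto
  then have "nlrm_critical s"
    using nlrm_critical_append_max[OF _ below] \<open>distinct s\<close> t
    unfolding s critical_lists_def by auto
  ultimately show "s \<in> critical_lists {1..n} q"
    using nlrm_append_max[OF below] t assms(3)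
    unfolding critical_lists_def permutations_of_set_def s by simp
qed

lemma finite_critical_lists: "finite (critical_lists A q)"
  unfolding critical_lists_def by (rule finite_subset[OF _ finite_permutations_of_set]) blast

lemma critical_block_components:
  fixes n :: nat
  assumes "2 \<le> n" "B \<subseteq> {1..n-2}"
    and "t \<in> critical_lists ({1..n-2} - B) r" "S \<in> permutations_of_set (insert (n - 1) B)"
  shows "n \<notin> set t" "n \<notin> set S" "set S = insert (n - 1) B"
proof -
  have "n \<notin> {1..n-2}" "n \<noteq> n - 1" using assms(1) by auto
  then show "n \<notin> set t" "n \<notin> set S" "set S = insert (n - 1) B"
    using assms(2-4) unfolding critical_lists_def permutations_of_set_def by auto
qed

lemma critical_block_disjoint:
  assumes "2 \<le> n" "B \<subseteq> {1..n-2}" "B' \<subseteq> {1..n-2}" "B \<noteq> B'"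
  shows "critical_block n q B \<inter> critical_block n q B' = {}"
proof (rule ccontr)
  assume "critical_block n q B \<inter> critical_block n q B' \<noteq> {}"
  then obtain t S t' S' where eq: "t @ n # S = t' @ n # S'"
    and t: "t \<in> critical_lists ({1..n-2} - B) (q - Suc (card B))"
    and S: "S \<in> permutations_of_set (insert (n - 1) B)"
    and t': "t' \<in> critical_lists ({1..n-2} - B') (q - Suc (card B'))"
    and S': "S' \<in> permutations_of_set (insert (n - 1) B')"
    unfolding critical_block_def by auto
  have "S = S'" using eq critical_block_components[OF assms(1,2) t S] by (simp add: append_Cons_eq_iff)
  then have "insert (n - 1) B = insert (n - 1) B'"
    using critical_block_components(3)[OF assms(1,2) t S] critical_block_components(3)[OF assms(1,3) t' S']
    by simp
  moreover have "n - 1 \<notin> B" "n - 1 \<notin> B'" using assms(1-3) by force+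
  ultimately show False using assms(4) by (metis insert_ident)
qed

lemma card_critical_block:
  assumes "2 \<le> n" "B \<subseteq> {1..n-2}"
  shows "card (critical_block n q B) = num_critical (n - 2 - card B) (q - Suc (card B)) * fact (Suc (card B))"
proof -
  have fin: "finite B" using assms(2) finite_subset by blast
  let ?T = "critical_lists ({1..n-2} - B) (q - Suc (card B))"
  let ?S = "permutations_of_set (insert (n - 1) B)"
  have "inj_on (\<lambda>(t, S). t @ n # S) (?T \<times> ?S)"
    using critical_block_components[OF assms] by (auto intro!: inj_onI simp: append_Cons_eq_iff)
  then have "card (critical_block n q B) = card ?T * card ?S"
    unfolding critical_block_def by (simp add: card_image card_cartesian_product)
  moreover have "card ?T = num_critical (n - 2 - card B) (q - Suc (card B))"
    using card_critical_lists[of "{1..n-2} - B"] assms(2) fin by (simp add: card_Diff_subset)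
  moreover have "n - 1 \<notin> B" using assms by force
  then have "card ?S = fact (Suc (card B))" using fin by simp
  ultimately show ?thesis by simp
qed

lemma sum_subsets_card_less:
  assumes "finite X"
  shows "(\<Sum>B\<in>{B. B \<subseteq> X \<and> card B < q}. f (card B)) = (\<Sum>l<q. (card X choose l) * f l)"
proof -
  have "{B. B \<subseteq> X \<and> card B < q} = (\<Union>l<q. {B. B \<subseteq> X \<and> card B = l})" by auto
  moreover have "finite {B. B \<subseteq> X \<and> card B = l}" for l using assms by simp
  ultimately have "(\<Sum>B\<in>{B. B \<subseteq> X \<and> card B < q}. f (card B))
      = (\<Sum>l<q. \<Sum>B\<in>{B. B \<subseteq> X \<and> card B = l}. f (card B))"
    by (simp add: sum.UNION_disjoint disjoint_iff)
  also have "\<dots> = (\<Sum>l<q. (card X choose l) * f l)"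
    using n_subsets[OF assms] by simp
  finally show ?thesis .
qed

lemma num_critical_rec:
  assumes "2 \<le> n"
  shows "num_critical n q
    = (\<Sum>l<q. ((n - 2) choose l) * (num_critical (n - 2 - l) (q - Suc l) * fact (Suc l)))"
proof -
  define \<B> where "\<B> = {B. B \<subseteq> {1..n-2} \<and> card B < q}"
  have "critical_lists {1..n} q = (\<Union>B\<in>\<B>. critical_block n q B)"
  proof (intro equalityI subsetI)
    fix s assume "s \<in> critical_lists {1..n} q"
    then show "s \<in> (\<Union>B\<in>\<B>. critical_block n q B)"
      using critical_lists_subset_blocks[OF assms] unfolding \<B>_def by auto
  next
    fix s assume "s \<in> (\<Union>B\<in>\<B>. critical_block n q B)"
    then show "s \<in> critical_lists {1..n} q"
      using critical_block_subset[OF assms] unfolding \<B>_def by auto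
  qed
  then have "num_critical n q = (\<Sum>B\<in>\<B>. card (critical_block n q B))"
    unfolding num_critical_def \<B>_def
    using critical_block_disjoint[OF assms]
    by (simp add: card_UN_disjoint critical_block_def finite_critical_lists)
  also have "\<dots> = (\<Sum>B\<in>\<B>. num_critical (n - 2 - card B) (q - Suc (card B)) * fact (Suc (card B)))"
    unfolding \<B>_def using card_critical_block[OF assms] by simp
  also have "\<dots> = (\<Sum>l<q. ((n - 2) choose l) * (num_critical (n - 2 - l) (q - Suc l) * fact (Suc l)))"
    unfolding \<B>_def by (subst sum_subsets_card_less) simp_all
  finally show ?thesis .
qed

lemma b_eq_num_critical: "b n p = num_critical n (Suc p)"
proof -
  have "is_perm s \<and> length s = n \<longleftrightarrow> s \<in> permutations_of_set {1..n}" for s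
    unfolding is_perm_def permutations_of_set_def using distinct_card by fastforce
  then have "{s \<in> basis p. length s = n} = critical_lists {1..n} (Suc p)"
    unfolding basis_eq critical_lists_def by blast
  then show ?thesis unfolding b_def num_critical_def by simp
qed

lemma length_le_twice_nlrm: "distinct s \<Longrightarrow> nlrm_critical s \<Longrightarrow> length s \<le> 2 * nlrm s"
proof (induction "length s" arbitrary: s rule: less_induct)
  case less
  show ?case
  proof (cases "s = []")
    case False
    define M where "M = Max (set s)"
    then have "M \<in> set s" using False by simp
    then obtain t S where s: "s = t @ M # S" using split_list by metis
    have "\<forall>x\<in>set s. x \<le> M" unfolding M_def by simp
    then have below: "\<forall>x\<in>set t. x < M" "\<forall>x\<in>set S. x < M"
      using less.prems(1) unfolding s by (auto simp: le_less)
    have "nlrm_critical t" "S \<noteq> []"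
      using nlrm_critical_append_max[OF _ below] less.prems unfolding s by auto
    moreover have "length t \<le> 2 * nlrm t"
      using less \<open>nlrm_critical t\<close> unfolding s by simp
    ultimately show ?thesis using nlrm_append_max[OF below] unfolding s by (cases S) auto
  qed simp
qed

lemma num_critical_0_0: "num_critical 0 0 = 1"
proof -
  have "critical_lists {1..0::nat} 0 = {[]}"
    unfolding critical_lists_def nlrm_critical_def nlrm_def by (auto simp: permutations_of_set_def)
  then show ?thesis unfolding num_critical_def by simp
qed

lemma num_critical_eq_0:
  assumes "0 < n" "q = 0 \<or> n \<le> q"
  shows "num_critical n q = 0"
proof -
  have "critical_lists {1..n} q = {}"
  proof (rule ccontr)
    assume "critical_lists {1..n} q \<noteq> {}"
    then obtain s where "s \<in> permutations_of_set {1..n}" "nlrm_critical s" "nlrm s = q"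
      unfolding critical_lists_def by blast
    moreover from this have "length s = n" by (simp add: length_finite_permutations_of_set)
    ultimately show False
      using assms nlrm_less_length[of s] unfolding nlrm_critical_def by force
  qed
  then show ?thesis unfolding num_critical_def by simp
qed

lemma b_eq_0:
  assumes "2 * int p < int n - 2 \<or> int p > int n - 2"
  shows "b n p = 0"
proof -
  have "critical_lists {1..n} (Suc p) = {}"
  proof (rule ccontr)
    assume "critical_lists {1..n} (Suc p) \<noteq> {}"
    then obtain s where s: "s \<in> permutations_of_set {1..n}" "nlrm_critical s" "nlrm s = Suc p"
      unfolding critical_lists_def by blast
    then have "length s = n" "distinct s" "s \<noteq> []"
      by (auto simp: length_finite_permutations_of_set permutations_of_set_def nlrm_def)
    then have "Suc p < n" "n \<le> 2 * Suc p"
      using nlrm_less_length[of s] length_le_twice_nlrm[of s] s(2,3) by auto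
    then have "int p + 2 \<le> int n" "int n \<le> 2 * int p + 2" by simp_all
    then show False using assms by linarith
  qed
  then show ?thesis unfolding b_eq_num_critical num_critical_def by simp
qed

lemma b_top:
  assumes "1 < n"
  shows "b n (n - 2) = fact (n - 1)"
proof -
  define m where "m = n - 2"
  then have n: "n = m + 2" using assms by simp
  have "b n (n - 2) = (\<Sum>l<Suc m. (m choose l) * (num_critical (m - l) (m - l) * fact (Suc l)))"
    unfolding b_eq_num_critical n using num_critical_rec[of "m + 2" "Suc m"] by simp
  also have "\<dots> = (\<Sum>l<m. (m choose l) * (num_critical (m - l) (m - l) * fact (Suc l))) + fact (Suc m)"
    by (simp add: num_critical_0_0)
  also have "(\<Sum>l<m. (m choose l) * (num_critical (m - l) (m - l) * fact (Suc l))) = 0"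
    by (intro sum.neutral) (simp add: num_critical_eq_0)
  finally show ?thesis using n by simp
qed

lemma b_rec:
  assumes "p < n - 2"
  shows "b n p = (\<Sum>l = 0..<p. fact (l + 1) * ((n - 2) choose l) * b (n - l - 2) (p - l - 1))"
proof -
  have "b n p = (\<Sum>l<Suc p. ((n - 2) choose l) * (num_critical (n - 2 - l) (p - l) * fact (Suc l)))"
    unfolding b_eq_num_critical using num_critical_rec[of n] assms by simp
  also have "\<dots> = (\<Sum>l<p. ((n - 2) choose l) * (num_critical (n - 2 - l) (p - l) * fact (Suc l)))"
    using num_critical_eq_0[of "n - 2 - p" 0] assms by simp
  also have "\<dots> = (\<Sum>l = 0..<p. fact (l + 1) * ((n - 2) choose l) * b (n - l - 2) (p - l - 1))"
    unfolding atLeast0LessThan b_eq_num_critical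
    by (intro sum.cong) (auto simp: Suc_diff_Suc diff_diff_add add.commute)
  finally show ?thesis .
qed

theorem mainTheorem7:
  shows "(\<forall>n p. (2 * int p < int n - 2 \<or> int p > int n - 2) \<longrightarrow> b n p = 0)
    \<and> (\<forall>n. n > 1 \<longrightarrow> b n (n - 2) = fact (n - 1))
    \<and> (\<forall>n p. p < n - 2 \<longrightarrow>
          b n p = (\<Sum>l = 0..<p. fact (l + 1) * ((n - 2) choose l) * b (n - l - 2) (p - l - 1)))"
  using b_eq_0 b_top b_rec by blast

end
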